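(* Let $k\geq 2$ and $r\geq 2$ be integers, and let $z_1,\dots,z_k\in\mathbb{C}_+:=\{z\in\mathbb{C}:\Re(z)\geq 0\}$ be nonzero and satisfy $\sum_{i=1}^k z_i^r=0$. Then $$\max_{i=1,\dots,k}\mathrm{Arg}(z_i)-\min_{i=1,\dots,k}\mathrm{Arg}(z_i)\geq\frac{\pi}{r}.$$
   Context: $\mathrm{Arg}$ denotes the principal value of the argument of a nonzero complex number. *)

theory Defs
  imports "HOL-Analysis.Analysis"
begin

end

theory Submission
  imports Defs
begin

text \<open>If the spread of the arguments were below \<open>\<pi>/r\<close>, De Moivre puts all
  \<open>z\<^sub>i\<^sup>r\<close> at angles \<open>r\<cdot>Arg z\<^sub>i\<close> inside an open arc of length less than \<open>\<pi>\<close>.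
  Rotating by the midpoint of that arc moves every \<open>z\<^sub>i\<^sup>r\<close> into the open right
  half-plane, so the rotated sum has positive real part and cannot vanish.\<close>

lemma Re_rcis_times_cis_pos:
  assumes "0 < a" and "\<bar>\<theta> - c\<bar> < pi / 2"
  shows "0 < Re (rcis a \<theta> * cis (- c))"
proof -
  have "rcis a \<theta> * cis (- c) = rcis a (\<theta> - c)"
    by (simp add: rcis_def cis_mult mult.assoc)
  moreover have "0 < cos (\<theta> - c)"
    using assms(2) by (intro cos_gt_zero_pi) linarith+
  ultimately show ?thesis
    using assms(1) by (simp del: cos_diff)
qed

lemma sum_rcis_nonzero_in_open_half_plane:
  assumes "finite A" and "A \<noteq> {}"
    and "\<And>i. i \<in> A \<Longrightarrow> 0 < a i"
    and "\<And>i. i \<in> A \<Longrightarrow> \<bar>\<theta> i - c\<bar> < pi / 2"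
  shows "(\<Sum>i\<in>A. rcis (a i) (\<theta> i)) \<noteq> 0"
proof
  assume "(\<Sum>i\<in>A. rcis (a i) (\<theta> i)) = 0"
  hence "0 = Re ((\<Sum>i\<in>A. rcis (a i) (\<theta> i)) * cis (- c))"
    by simp
  also have "\<dots> = (\<Sum>i\<in>A. Re (rcis (a i) (\<theta> i) * cis (- c)))"
    by (simp add: sum_distrib_right)
  also have "\<dots> > 0"
    using assms by (intro sum_pos Re_rcis_times_cis_pos) auto
  finally show False
    by simp
qed

lemma power_eq_rcis_Arg: "z ^ n = rcis (cmod z ^ n) (real n * Arg z)"
  by (metis DeMoivre2 rcis_cmod_Arg)

lemma sum_power_nonzero_if_Arg_spread_small:
  fixes z :: "'a \<Rightarrow> complex"
  assumes "finite A" and "A \<noteq> {}" and "0 < n"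
    and nonzero: "\<And>i. i \<in> A \<Longrightarrow> z i \<noteq> 0"
    and spread: "(MAX i\<in>A. Arg (z i)) - (MIN i\<in>A. Arg (z i)) < pi / real n"
  shows "(\<Sum>i\<in>A. z i ^ n) \<noteq> 0"
proof -
  define M where "M = (MAX i\<in>A. Arg (z i))"
  define m where "m = (MIN i\<in>A. Arg (z i))"
  have spread': "real n * (M - m) < pi"
    using spread \<open>0 < n\<close> unfolding M_def m_def by (simp add: field_simps)
  have "\<bar>real n * Arg (z i) - real n * (m + M) / 2\<bar> < pi / 2" if "i \<in> A" for i
  proof -
    have "m \<le> Arg (z i)" "Arg (z i) \<le> M"
      unfolding m_def M_def using that \<open>finite A\<close> by auto
    hence "real n * m \<le> real n * Arg (z i)" "real n * Arg (z i) \<le> real n * M"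
      by (simp_all add: mult_left_mono)
    with spread' show ?thesis
      by (simp add: abs_less_iff field_simps)
  qed
  moreover have "0 < cmod (z i) ^ n" if "i \<in> A" for i
    using nonzero[OF that] by simp
  ultimately show ?thesis
    unfolding power_eq_rcis_Arg
    using assms(1,2) by (intro sum_rcis_nonzero_in_open_half_plane) auto
qed

theorem lemma2p2:
  fixes k r :: nat and z :: "nat \<Rightarrow> complex"
  assumes "k \<ge> 2" and "r \<ge> 2"
    and "\<And>i. i \<in> {1..k} \<Longrightarrow> z i \<noteq> 0"
    and "\<And>i. i \<in> {1..k} \<Longrightarrow> Re (z i) \<ge> 0"
    and "(\<Sum>i=1..k. z i ^ r) = 0"
  shows "(MAX i\<in>{1..k}. Arg (z i)) - (MIN i\<in>{1..k}. Arg (z i)) \<ge> pi / real r"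
proof (rule ccontr)
  assume "\<not> ?thesis"
  hence "(\<Sum>i=1..k. z i ^ r) \<noteq> 0"
    using assms(1-3) by (intro sum_power_nonzero_if_Arg_spread_small) auto
  with assms(5) show False
    by contradiction
qed

end
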